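(* Let $A$ be a generalized ring and $a\in A_{[1]}$. Then the basic open set $D_a=\{\mathfrak p\in spec(A): a\notin\mathfrak p\}$ is compact (every cover by open subsets of $spec(A)$ has a finite subcover). In particular $spec(A)=D_1$ is compact.
   Context: All sets $X,Y,Z,W$ below are finite. A partial map $f:X\rightharpoonup Y$ is a map $f:D(f)\to Y$ defined on a subset $D(f)\subseteq X$; $Set_\bullet(X,Y)$ is the set of partial maps. $\mathbb F_\bullet$ is the category of finite sets with partial bijections; $f^t$ is the inverse. $[1]=\{1\}$, $c_X:X\to[1]$ the total map. A generalized ring $A$ consists of: a functor $X\mapsto A_X$ from $\mathbb F_\bullet$ to pointed sets with $A_\emptyset=\{0\}$; $A_f=\prod_{y\in Y}A_{f^{-1}(y)}$ for $f\in Set_\bullet(X,Y)$ (so $A_{c_X}=A_X$, $A_{id_X}=(A_{[1]})^X$); multiplications $\circ:A_Y\times A_f\to A_X$ and contractions $(\,,\,):A_X\times A_f\to A_Y$, zero when an argument is zero, extended fibrewise for $g\in Set_\bullet(Y,Z)$ to $\circ:A_g\times A_f\to A_{g\circ f}$, $(\,,\,):A_{g\circ f}\times A_f\to A_g$ via $(a\circ b)^{(z)}=a^{(z)}\circ b|_z$, $(c,b)^{(z)}=(c^{(z)},b|_z)$ ($b|_z=(b^{(y)})_{y\in g^{-1}(z)}$ for the restriction $f|_z:(g\circ f)^{-1}(z)\rightharpoonup g^{-1}(z)$); and a unit $1\in A_{[1]}$ (with transports $1_x$, and $1_f\in A_f$ for partial bijections $f$ with components $1_{f^t(y)}$ on the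 image, $0$ elsewhere); satisfying for $W\xleftarrow{h}Z\xleftarrow{g}Y\xleftarrow{f}X$: $d\circ(c\circ b)=(d\circ c)\circ b$; $(d,a\circ c)=((d,c),a)$ ($d\in A_{h\circ g\circ f},a\in A_g,c\in A_f$); $(d\circ c,a)=(d,(a,c))$ ($d\in A_{h\circ g},a\in A_{g\circ f},c\in A_f$); $(d\circ a,c)=d\circ(a,c)$ ($d\in A_h,a\in A_{g\circ f},c\in A_f$); for $Z\xrightarrow{g}Y\xleftarrow{f}X$, $h\in Set_\bullet(Y,W)$, $P=\{(z,x)\in D(g)\times D(f):g(z)=f(x)\}$ with projections $\tilde f,\tilde g$, $\tilde c^{(z)}=c^{(g(z))}$, $\tilde a^{(x)}=a^{(f(x))}$: $(d,c)\circ a=(d\circ\tilde a,\tilde c)$ ($d\in A_{h\circ f},a\in A_g,c\in A_f$); $a\circ1_{id_X}=1_{id_Y}\circ a=(a,1_{id_X})=a$ ($a\in A_f$); $a\circ1_{f^t}=(a,1_f)=f_A(a)$ ($a\in A_X$, $f$ a partial bijection). $A_{[1]}$ is a commutative monoid under $\circ$ with unit $1$. An h-ideal is a subset $\mathfrak a\subseteq A_{[1]}$ with $(b\circ c,d)\in\mathfrak a$ for all finite $X$, $b,d\in A_X$, $c\in\mathfrak a^X\subseteq(A_{[1]})^X$; proper if $1\notin\mathfrak a$. A prime is a proper h-ideal $\mathfrak p$ with $a\circ b\in\mathfrak p\Rightarrow a\in\mathfrak p$ or $b\in\mathfrak p$; $spec(A)$ is the set of primes, with the Zariski topology whose closed sets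 are $V(\mathfrak a)=\{\mathfrak p:\mathfrak p\supseteq\mathfrak a\}$, $\mathfrak a\subseteq A_{[1]}$. *)

theory Defs
  imports Main "HOL-Library.Nat_Bijection"
begin

text \<open>Finite sets are modelled as finite subsets of nat; [1] is the set {1}.
  A partial map f : X -> Y is a map nat -> nat option with dom f in X, ran f in Y.
  Elements of all A_X live in one carrier type 'e; A_X is gr_car A X.\<close>

record 'e gring =
  gr_car   :: "nat set \<Rightarrow> 'e set"
  gr_zero  :: "nat set \<Rightarrow> 'e"
  gr_tr    :: "nat set \<Rightarrow> nat set \<Rightarrow> (nat \<Rightarrow> nat option) \<Rightarrow> 'e \<Rightarrow> 'e"
  gr_mult  :: "nat set \<Rightarrow> nat set \<Rightarrow> (nat \<Rightarrow> nat option) \<Rightarrow> 'e \<Rightarrow> (nat \<Rightarrow> 'e) \<Rightarrow> 'e"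
  gr_contr :: "nat set \<Rightarrow> nat set \<Rightarrow> (nat \<Rightarrow> nat option) \<Rightarrow> 'e \<Rightarrow> (nat \<Rightarrow> 'e) \<Rightarrow> 'e"
  gr_one   :: 'e

text \<open>gr_tr X Y f : A_X -> A_Y for a partial bijection f;
  gr_mult X Y f a b = a o b for f : X -> Y, a in A_Y, b in A_f, result in A_X;
  gr_contr X Y f c b = (c,b) for c in A_X, b in A_f, result in A_Y.\<close>

definition pmap :: "nat set \<Rightarrow> nat set \<Rightarrow> (nat \<Rightarrow> nat option) \<Rightarrow> bool" where
  "pmap X Y f \<longleftrightarrow> dom f \<subseteq> X \<and> ran f \<subseteq> Y"

definition pbij :: "nat set \<Rightarrow> nat set \<Rightarrow> (nat \<Rightarrow> nat option) \<Rightarrow> bool" where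
  "pbij X Y f \<longleftrightarrow> pmap X Y f \<and> inj_on f (dom f)"

definition pinv :: "(nat \<Rightarrow> nat option) \<Rightarrow> nat \<Rightarrow> nat option" where
  "pinv f y = (if y \<in> ran f then Some (THE x. f x = Some y) else None)"

definition fib :: "(nat \<Rightarrow> nat option) \<Rightarrow> nat \<Rightarrow> nat set" where
  "fib f y = {x. f x = Some y}"

definition idm :: "nat set \<Rightarrow> nat \<Rightarrow> nat option" where
  "idm X = (\<lambda>x. if x \<in> X then Some x else None)"

definition cmap :: "nat set \<Rightarrow> nat \<Rightarrow> nat option" where
  "cmap X = (\<lambda>x. if x \<in> X then Some 1 else None)"

definition restr :: "(nat \<Rightarrow> 'e) \<Rightarrow> nat set \<Rightarrow> nat \<Rightarrow> 'e" where
  "restr b S = (\<lambda>y. if y \<in> S then b y else undefined)"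

definition vec1 :: "'e \<Rightarrow> nat \<Rightarrow> 'e" where
  "vec1 d = (\<lambda>y. if y = 1 then d else undefined)"

text \<open>A_f = product over y in Y of A_{f^{-1}(y)} (extensional functions on Y).\<close>
definition Af :: "'e gring \<Rightarrow> nat set \<Rightarrow> (nat \<Rightarrow> nat option) \<Rightarrow> (nat \<Rightarrow> 'e) set" where
  "Af A Y f = {b. (\<forall>y\<in>Y. b y \<in> gr_car A (fib f y)) \<and> (\<forall>y. y \<notin> Y \<longrightarrow> b y = undefined)}"

definition zeroF :: "'e gring \<Rightarrow> nat set \<Rightarrow> (nat \<Rightarrow> nat option) \<Rightarrow> nat \<Rightarrow> 'e" where
  "zeroF A Y f = (\<lambda>y. if y \<in> Y then gr_zero A (fib f y) else undefined)"

definition one_at :: "'e gring \<Rightarrow> nat \<Rightarrow> 'e" where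
  "one_at A x = gr_tr A {1} {x} [1 \<mapsto> x] (gr_one A)"

definition one_f :: "'e gring \<Rightarrow> nat set \<Rightarrow> (nat \<Rightarrow> nat option) \<Rightarrow> nat \<Rightarrow> 'e" where
  "one_f A Y f = (\<lambda>y. if y \<in> Y then (case pinv f y of Some x \<Rightarrow> one_at A x | None \<Rightarrow> gr_zero A {})
                     else undefined)"

text \<open>Fibrewise extensions: for f : X -> Y, g : Y -> Z,
  ext_mult : A_g x A_f -> A_{g o f} and ext_contr : A_{g o f} x A_f -> A_g.\<close>
definition ext_mult :: "'e gring \<Rightarrow> nat set \<Rightarrow> (nat \<Rightarrow> nat option) \<Rightarrow> (nat \<Rightarrow> nat option)
    \<Rightarrow> (nat \<Rightarrow> 'e) \<Rightarrow> (nat \<Rightarrow> 'e) \<Rightarrow> nat \<Rightarrow> 'e" where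
  "ext_mult A Z g f a b = (\<lambda>z. if z \<in> Z then
      gr_mult A (fib (g \<circ>\<^sub>m f) z) (fib g z) (f |` fib (g \<circ>\<^sub>m f) z) (a z) (restr b (fib g z))
    else undefined)"

definition ext_contr :: "'e gring \<Rightarrow> nat set \<Rightarrow> (nat \<Rightarrow> nat option) \<Rightarrow> (nat \<Rightarrow> nat option)
    \<Rightarrow> (nat \<Rightarrow> 'e) \<Rightarrow> (nat \<Rightarrow> 'e) \<Rightarrow> nat \<Rightarrow> 'e" where
  "ext_contr A Z g f c b = (\<lambda>z. if z \<in> Z then
      gr_contr A (fib (g \<circ>\<^sub>m f) z) (fib g z) (f |` fib (g \<circ>\<^sub>m f) z) (c z) (restr b (fib g z))
    else undefined)"

text \<open>Fibre product P of Z -g-> Y <-f- X (pairs encoded in nat) and its projections.\<close>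
definition pb :: "(nat \<Rightarrow> nat option) \<Rightarrow> (nat \<Rightarrow> nat option) \<Rightarrow> nat set" where
  "pb g f = {prod_encode (z, x) | z x. \<exists>y. g z = Some y \<and> f x = Some y}"

definition prj1 :: "nat set \<Rightarrow> nat \<Rightarrow> nat option" where
  "prj1 P = (\<lambda>p. if p \<in> P then Some (fst (prod_decode p)) else None)"

definition prj2 :: "nat set \<Rightarrow> nat \<Rightarrow> nat option" where
  "prj2 P = (\<lambda>p. if p \<in> P then Some (snd (prod_decode p)) else None)"

text \<open>a~ in A_{g~} (g~ : P -> X), with a~^(x) = a^(f x) transported along z |-> (z,x).\<close>
definition atil :: "'e gring \<Rightarrow> nat set \<Rightarrow> (nat \<Rightarrow> nat option) \<Rightarrow> (nat \<Rightarrow> nat option)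
    \<Rightarrow> (nat \<Rightarrow> 'e) \<Rightarrow> nat \<Rightarrow> 'e" where
  "atil A X g f a = (\<lambda>x. if x \<in> X then
      (case f x of
         Some y \<Rightarrow> gr_tr A (fib g y) (fib (prj2 (pb g f)) x)
                     (\<lambda>z. if z \<in> fib g y then Some (prod_encode (z, x)) else None) (a y)
       | None \<Rightarrow> gr_zero A (fib (prj2 (pb g f)) x))
    else undefined)"

text \<open>c~ in A_{f~} (f~ : P -> Z), with c~^(z) = c^(g z) transported along x |-> (z,x).\<close>
definition ctil :: "'e gring \<Rightarrow> nat set \<Rightarrow> (nat \<Rightarrow> nat option) \<Rightarrow> (nat \<Rightarrow> nat option)
    \<Rightarrow> (nat \<Rightarrow> 'e) \<Rightarrow> nat \<Rightarrow> 'e" where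
  "ctil A Z g f c = (\<lambda>z. if z \<in> Z then
      (case g z of
         Some y \<Rightarrow> gr_tr A (fib f y) (fib (prj1 (pb g f)) z)
                     (\<lambda>x. if x \<in> fib f y then Some (prod_encode (z, x)) else None) (c y)
       | None \<Rightarrow> gr_zero A (fib (prj1 (pb g f)) z))
    else undefined)"

definition mult1 :: "'e gring \<Rightarrow> 'e \<Rightarrow> 'e \<Rightarrow> 'e" where
  "mult1 A a b = gr_mult A {1} {1} (idm {1}) a (vec1 b)"

definition gr_functor :: "'e gring \<Rightarrow> bool" where
  "gr_functor A \<longleftrightarrow>
    (\<forall>X. finite X \<longrightarrow> gr_zero A X \<in> gr_car A X) \<and>
    gr_car A {} = {gr_zero A {}} \<and>
    (\<forall>X Y f. finite X \<and> finite Y \<and> pbij X Y f \<longrightarrow>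
        (\<forall>a\<in>gr_car A X. gr_tr A X Y f a \<in> gr_car A Y) \<and> gr_tr A X Y f (gr_zero A X) = gr_zero A Y) \<and>
    (\<forall>X. finite X \<longrightarrow> (\<forall>a\<in>gr_car A X. gr_tr A X X (idm X) a = a)) \<and>
    (\<forall>X Y Z f g. finite X \<and> finite Y \<and> finite Z \<and> pbij X Y f \<and> pbij Y Z g \<longrightarrow>
        (\<forall>a\<in>gr_car A X. gr_tr A X Z (g \<circ>\<^sub>m f) a = gr_tr A Y Z g (gr_tr A X Y f a)))"

definition gr_ops :: "'e gring \<Rightarrow> bool" where
  "gr_ops A \<longleftrightarrow>
    gr_one A \<in> gr_car A {1} \<and>
    (\<forall>X Y f. finite X \<and> finite Y \<and> pmap X Y f \<longrightarrow>
       (\<forall>a\<in>gr_car A Y. \<forall>b\<in>Af A Y f. gr_mult A X Y f a b \<in> gr_car A X) \<and>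
       (\<forall>c\<in>gr_car A X. \<forall>b\<in>Af A Y f. gr_contr A X Y f c b \<in> gr_car A Y) \<and>
       (\<forall>b\<in>Af A Y f. gr_mult A X Y f (gr_zero A Y) b = gr_zero A X) \<and>
       (\<forall>b\<in>Af A Y f. gr_contr A X Y f (gr_zero A X) b = gr_zero A Y) \<and>
       (\<forall>a\<in>gr_car A Y. gr_mult A X Y f a (zeroF A Y f) = gr_zero A X) \<and>
       (\<forall>c\<in>gr_car A X. gr_contr A X Y f c (zeroF A Y f) = gr_zero A Y))"

definition gr_assoc_axioms :: "'e gring \<Rightarrow> bool" where
  "gr_assoc_axioms A \<longleftrightarrow>
    (\<forall>X Y Z W f g h. finite X \<and> finite Y \<and> finite Z \<and> finite W \<and>
        pmap X Y f \<and> pmap Y Z g \<and> pmap Z W h \<longrightarrow>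
      (\<forall>d\<in>Af A W h. \<forall>c\<in>Af A Z g. \<forall>b\<in>Af A Y f.
         ext_mult A W h (g \<circ>\<^sub>m f) d (ext_mult A Z g f c b)
         = ext_mult A W (h \<circ>\<^sub>m g) f (ext_mult A W h g d c) b) \<and>
      (\<forall>d\<in>Af A W (h \<circ>\<^sub>m g \<circ>\<^sub>m f). \<forall>a\<in>Af A Z g. \<forall>c\<in>Af A Y f.
         ext_contr A W h (g \<circ>\<^sub>m f) d (ext_mult A Z g f a c)
         = ext_contr A W h g (ext_contr A W (h \<circ>\<^sub>m g) f d c) a) \<and>
      (\<forall>d\<in>Af A W (h \<circ>\<^sub>m g). \<forall>a\<in>Af A Z (g \<circ>\<^sub>m f). \<forall>c\<in>Af A Y f.
         ext_contr A W h (g \<circ>\<^sub>m f) (ext_mult A W (h \<circ>\<^sub>m g) f d c) a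
         = ext_contr A W h g d (ext_contr A Z g f a c)) \<and>
      (\<forall>d\<in>Af A W h. \<forall>a\<in>Af A Z (g \<circ>\<^sub>m f). \<forall>c\<in>Af A Y f.
         ext_contr A W (h \<circ>\<^sub>m g) f (ext_mult A W h (g \<circ>\<^sub>m f) d a) c
         = ext_mult A W h g d (ext_contr A Z g f a c)))"

definition gr_pullback_axiom :: "'e gring \<Rightarrow> bool" where
  "gr_pullback_axiom A \<longleftrightarrow>
    (\<forall>X Y Z W f g h. finite X \<and> finite Y \<and> finite Z \<and> finite W \<and>
        pmap Z Y g \<and> pmap X Y f \<and> pmap Y W h \<longrightarrow>
      (\<forall>d\<in>Af A W (h \<circ>\<^sub>m f). \<forall>a\<in>Af A Y g. \<forall>c\<in>Af A Y f.
         ext_mult A W h g (ext_contr A W h f d c) a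
         = ext_contr A W (h \<circ>\<^sub>m g) (prj1 (pb g f))
             (ext_mult A W (h \<circ>\<^sub>m f) (prj2 (pb g f)) d (atil A X g f a))
             (ctil A Z g f c)))"

definition gr_unit_axioms :: "'e gring \<Rightarrow> bool" where
  "gr_unit_axioms A \<longleftrightarrow>
    (\<forall>X Y f. finite X \<and> finite Y \<and> pmap X Y f \<longrightarrow>
      (\<forall>a\<in>Af A Y f.
         ext_mult A Y f (idm X) a (one_f A X (idm X)) = a \<and>
         ext_mult A Y (idm Y) f (one_f A Y (idm Y)) a = a \<and>
         ext_contr A Y f (idm X) a (one_f A X (idm X)) = a)) \<and>
    (\<forall>X Y f. finite X \<and> finite Y \<and> pbij X Y f \<longrightarrow>
      (\<forall>a\<in>gr_car A X.
         gr_mult A Y X (pinv f) a (one_f A X (pinv f)) = gr_tr A X Y f a \<and>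
         gr_contr A X Y f a (one_f A Y f) = gr_tr A X Y f a))"

definition gr_comm_monoid :: "'e gring \<Rightarrow> bool" where
  "gr_comm_monoid A \<longleftrightarrow>
    (\<forall>a\<in>gr_car A {1}. \<forall>b\<in>gr_car A {1}. \<forall>c\<in>gr_car A {1}.
       mult1 A (mult1 A a b) c = mult1 A a (mult1 A b c)) \<and>
    (\<forall>a\<in>gr_car A {1}. \<forall>b\<in>gr_car A {1}. mult1 A a b = mult1 A b a) \<and>
    (\<forall>a\<in>gr_car A {1}. mult1 A (gr_one A) a = a \<and> mult1 A a (gr_one A) = a)"

definition generalized_ring :: "'e gring \<Rightarrow> bool" where
  "generalized_ring A \<longleftrightarrow> gr_functor A \<and> gr_ops A \<and> gr_assoc_axioms A \<and>
     gr_pullback_axiom A \<and> gr_unit_axioms A \<and> gr_comm_monoid A"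

text \<open>c in (A_[1])^X viewed in A_{id_X} via the transports A_[1] -> A_{x}.\<close>
definition cvec :: "'e gring \<Rightarrow> nat set \<Rightarrow> (nat \<Rightarrow> 'e) \<Rightarrow> nat \<Rightarrow> 'e" where
  "cvec A X c = (\<lambda>x. if x \<in> X then gr_tr A {1} {x} [1 \<mapsto> x] (c x) else undefined)"

definition h_ideal :: "'e gring \<Rightarrow> 'e set \<Rightarrow> bool" where
  "h_ideal A I \<longleftrightarrow> I \<subseteq> gr_car A {1} \<and>
    (\<forall>X. finite X \<longrightarrow> (\<forall>b\<in>gr_car A X. \<forall>d\<in>gr_car A X. \<forall>c. (\<forall>x\<in>X. c x \<in> I) \<longrightarrow>
        gr_contr A X {1} (cmap X) (gr_mult A X X (idm X) b (cvec A X c)) (vec1 d) \<in> I))"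

definition is_prime :: "'e gring \<Rightarrow> 'e set \<Rightarrow> bool" where
  "is_prime A P \<longleftrightarrow> h_ideal A P \<and> gr_one A \<notin> P \<and>
    (\<forall>a\<in>gr_car A {1}. \<forall>b\<in>gr_car A {1}. mult1 A a b \<in> P \<longrightarrow> a \<in> P \<or> b \<in> P)"

definition spec :: "'e gring \<Rightarrow> 'e set set" where
  "spec A = {P. is_prime A P}"

definition zarV :: "'e gring \<Rightarrow> 'e set \<Rightarrow> 'e set set" where
  "zarV A I = {P \<in> spec A. I \<subseteq> P}"

definition zar_open :: "'e gring \<Rightarrow> 'e set set \<Rightarrow> bool" where
  "zar_open A U \<longleftrightarrow> (\<exists>I. I \<subseteq> gr_car A {1} \<and> U = spec A - zarV A I)"

definition basicD :: "'e gring \<Rightarrow> 'e \<Rightarrow> 'e set set" where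
  "basicD A a = {P \<in> spec A. a \<notin> P}"

definition zar_compact :: "'e gring \<Rightarrow> 'e set set \<Rightarrow> bool" where
  "zar_compact A S \<longleftrightarrow> (\<forall>\<U>. (\<forall>U\<in>\<U>. zar_open A U) \<and> S \<subseteq> \<Union>\<U> \<longrightarrow>
      (\<exists>\<V>\<subseteq>\<U>. finite \<V> \<and> S \<subseteq> \<Union>\<V>))"

end

theory Submission
  imports Defs
begin

text \<open>
  A basic open set \<open>D\<^sub>a\<close> lies in the open set \<open>spec A - V(J)\<close> if and only if some
  power of \<open>a\<close> lies in the h-ideal generated by \<open>J\<close>. The nontrivial direction is prime
  avoidance: by Zorn's lemma there is an h-ideal \<open>M \<supseteq> J\<close> maximal among those containing
  no power of \<open>a\<close>, and \<open>M\<close> is prime because every colon \<open>{u. u \<circ> v \<in> M}\<close> is again an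
  h-ideal, a consequence of the pullback and associativity axioms. Membership in a generated
  h-ideal involves only finitely many generators, so a cover of \<open>D\<^sub>a\<close> by open sets
  \<open>spec A - V(I\<^sub>U)\<close> yields a power of \<open>a\<close> in the h-ideal generated by finitely many
  \<open>I\<^sub>U\<close>, i.e. a finite subcover.
\<close>

text \<open>Keeps the singleton \<open>[1] = {1}\<close> from being rewritten to \<open>{Suc 0}\<close>.\<close>
declare One_nat_def[simp del]

definition vec_at :: "nat \<Rightarrow> 'e \<Rightarrow> nat \<Rightarrow> 'e" where
  "vec_at x b = (\<lambda>y. if y = x then b else undefined)"

lemma vec1_eq_vec_at: "vec1 = vec_at 1" by (auto simp: vec1_def vec_at_def fun_eq_iff)
lemma vec_at_same[simp]: "vec_at x b x = b" by (simp add: vec_at_def)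
lemma restr_singleton[simp]: "restr b {x} = vec_at x (b x)" by (auto simp: restr_def vec_at_def fun_eq_iff)
lemma idm_comp_single[simp]: "b \<in> S \<Longrightarrow> idm S \<circ>\<^sub>m [a\<mapsto>b] = [a\<mapsto>b]"
  by (auto simp: idm_def map_comp_def fun_eq_iff)
lemma fib_idm[simp]: "fib (idm S) y = (if y \<in> S then {y} else {})" by (auto simp: fib_def idm_def)
lemma fib_single[simp]: "fib [a\<mapsto>b] y = (if y = b then {a} else {})" by (auto simp: fib_def)
lemma idm_comp: "ran f \<subseteq> S \<Longrightarrow> idm S \<circ>\<^sub>m f = f"
  by (auto simp: idm_def map_comp_def fun_eq_iff ran_def split: option.splits)
lemma single_comp_single[simp]: "[b\<mapsto>c] \<circ>\<^sub>m [a\<mapsto>b] = [a\<mapsto>c]"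
  by (auto simp: map_comp_def fun_eq_iff)
lemma idm_singleton: "idm {a} = [a\<mapsto>a]" by (auto simp: idm_def fun_eq_iff)
lemma pinv_single[simp]: "pinv [a\<mapsto>b] = [b\<mapsto>a]" by (auto simp: pinv_def fun_eq_iff ran_def)
lemma pbij_single[simp]: "pbij {a} {b} [a\<mapsto>b]" by (auto simp: pbij_def pmap_def ran_def)
lemma pmap_single[simp]: "pmap {a} {b} [a\<mapsto>b]" by (auto simp: pmap_def ran_def)
lemma pmap_idm[simp]: "pmap S S (idm S)" unfolding pmap_def idm_def by (auto simp: ran_def dom_def split: if_splits)
lemma pinv_idm[simp]: "pinv (idm S) = idm S"
proof (rule ext)
  fix y show "pinv (idm S) y = idm S y"
  proof (cases "y \<in> S")
    case True
    hence "(THE x. idm S x = Some y) = y" by (intro the_equality) (auto simp: idm_def split: if_splits)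
    with True show ?thesis by (auto simp: pinv_def ran_def idm_def)
  qed (auto simp: pinv_def ran_def idm_def split: if_splits)
qed
lemma pbij_idm[simp]: "pbij S S (idm S)" unfolding pbij_def using pmap_idm by (auto simp: inj_on_def idm_def split: if_splits)

lemma idm_idm[simp]: "idm S \<circ>\<^sub>m idm S = idm S" by (auto simp: idm_def map_comp_def fun_eq_iff)
lemma restr_idm[simp]: "idm S |` S = idm S" by (auto simp: idm_def restrict_map_def fun_eq_iff)
lemma cmap_restr[simp]: "cmap S |` S = cmap S" by (auto simp: cmap_def restrict_map_def fun_eq_iff)
lemma fib_cmap[simp]: "fib (cmap S) y = (if y = 1 then S else {})" by (auto simp: fib_def cmap_def)
lemma pmap_cmap[simp]: "pmap S {1} (cmap S)" unfolding pmap_def cmap_def by (auto simp: ran_def dom_def split: if_splits)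
lemma idm_comp_cmap[simp]: "idm {1} \<circ>\<^sub>m cmap S = cmap S" by (auto simp: idm_def cmap_def map_comp_def fun_eq_iff)
lemma cmap_in[simp]: "x \<in> S \<Longrightarrow> cmap S x = Some 1" by (simp add: cmap_def)
lemma idm_in[simp]: "x \<in> S \<Longrightarrow> idm S x = Some x" by (simp add: idm_def)
lemma cmap_singleton_1: "cmap {1} = idm {1}" by (auto simp: idm_def cmap_def fun_eq_iff)

text \<open>The fibre product of \<open>{1} \<rightarrow> {1} \<leftarrow> X\<close> is \<open>{(1, x). x \<in> X}\<close>, encoded as \<open>tag ` X\<close>.\<close>

definition tag :: "nat \<Rightarrow> nat" where "tag x = prod_encode (1, x)"
lemma tag_eq_iff[simp]: "tag x = tag y \<longleftrightarrow> x = y" by (simp add: tag_def)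
lemma prod_decode_tag[simp]: "prod_decode (tag x) = (1, x)" by (simp add: tag_def)
definition tag_map :: "nat set \<Rightarrow> nat \<Rightarrow> nat option" where "tag_map X = (\<lambda>x. if x \<in> X then Some (tag x) else None)"

lemma pb_idm_cmap[simp]: "pb (idm {1}) (cmap X) = tag ` X"
  by (auto simp: pb_def idm_def cmap_def tag_def split: if_splits)
lemma prj1_tag_image[simp]: "prj1 (tag ` X) = cmap (tag ` X)"
  by (auto simp: prj1_def cmap_def fun_eq_iff)
lemma prj2_tag[simp]: "x \<in> X \<Longrightarrow> prj2 (tag ` X) (tag x) = Some x"
  by (simp add: prj2_def)
lemma fib_prj2[simp]: "fib (prj2 (tag ` X)) x = (if x \<in> X then {tag x} else {})"
  by (auto simp: fib_def prj2_def)
lemma pmap_prj2[simp]: "pmap (tag ` X) X (prj2 (tag ` X))"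
  unfolding pmap_def prj2_def by (auto simp: ran_def dom_def split: if_splits)
lemma pbij_tag_map[simp]: "pbij X (tag ` X) (tag_map X)"
  unfolding pbij_def pmap_def tag_map_def by (auto simp: ran_def dom_def inj_on_def split: if_splits)
lemma pinv_tag_map[simp]: "pinv (tag_map X) = prj2 (tag ` X)"
proof (rule ext)
  fix q show "pinv (tag_map X) q = prj2 (tag ` X) q"
  proof (cases "q \<in> tag ` X")
    case True then obtain x where x: "x \<in> X" "q = tag x" by auto
    hence "(THE y. tag_map X y = Some q) = x" by (intro the_equality) (auto simp: tag_map_def split: if_splits)
    with x show ?thesis by (auto simp: pinv_def ran_def tag_map_def)
  next
    case False thus ?thesis by (auto simp: pinv_def ran_def tag_map_def prj2_def split: if_splits)
  qed
qed
lemma pinv_prj2_tag[simp]: "x \<in> X \<Longrightarrow> pinv (prj2 (tag ` X)) x = Some (tag x)"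
proof -
  assume x: "x \<in> X"
  hence "(THE q. prj2 (tag ` X) q = Some x) = tag x"
    by (intro the_equality) (auto simp: prj2_def split: if_splits)
  moreover have "x \<in> ran (prj2 (tag ` X))" unfolding ran_def using x by (auto intro!: exI[of _ "tag x"])
  ultimately show ?thesis by (simp add: pinv_def)
qed
lemma cmap_comp_prj2[simp]: "cmap X \<circ>\<^sub>m prj2 (tag ` X) = cmap (tag ` X)"
  by (auto simp: cmap_def prj2_def map_comp_def fun_eq_iff)
lemma idm_comp_prj2[simp]: "idm X \<circ>\<^sub>m prj2 (tag ` X) = prj2 (tag ` X)"
  by (auto simp: idm_def prj2_def map_comp_def fun_eq_iff)
lemma prj2_comp_idm[simp]: "prj2 (tag ` X) \<circ>\<^sub>m idm (tag ` X) = prj2 (tag ` X)"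
  by (auto simp: idm_def prj2_def map_comp_def fun_eq_iff)
lemma prj2_restr[simp]: "prj2 (tag ` X) |` (tag ` X) = prj2 (tag ` X)"
  by (auto simp: prj2_def restrict_map_def fun_eq_iff)
lemma prj2_restrict_single[simp]: "x \<in> X \<Longrightarrow> prj2 (tag ` X) |` {tag x} = [tag x \<mapsto> x]"
  by (auto simp: prj2_def restrict_map_def fun_eq_iff)
lemma restr_atil[simp]: "restr (atil A X g f a) X = atil A X g f a" by (auto simp: restr_def atil_def fun_eq_iff)
lemma restr_ext_mult[simp]: "restr (ext_mult A Z g f a b) Z = ext_mult A Z g f a b"
  by (auto simp: restr_def ext_mult_def fun_eq_iff)
lemma restr_cvec[simp]: "restr (cvec A X c) X = cvec A X c" by (auto simp: restr_def cvec_def fun_eq_iff)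
lemma cmap_comp_idm[simp]: "cmap S \<circ>\<^sub>m idm S = cmap S" by (auto simp: idm_def cmap_def map_comp_def fun_eq_iff)
lemma restr_one_f[simp]: "restr (one_f A X f) X = one_f A X f" by (auto simp: restr_def one_f_def fun_eq_iff)
lemma restr_ext: "(\<And>y. y \<notin> S \<Longrightarrow> F y = undefined) \<Longrightarrow> restr F S = F"
  by (auto simp: restr_def fun_eq_iff)

locale gen_ring = fixes A :: "'e gring" assumes gen_ring: "generalized_ring A"
begin

lemma functor_ax: "gr_functor A" and ops_ax: "gr_ops A" and assoc_ax: "gr_assoc_axioms A"
  and pullback_ax: "gr_pullback_axiom A" and unit_ax: "gr_unit_axioms A" and comm_monoid_ax: "gr_comm_monoid A"
  using gen_ring unfolding generalized_ring_def by auto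

abbreviation car where "car \<equiv> gr_car A"
abbreviation tr where "tr \<equiv> gr_tr A"
abbreviation mlt where "mlt \<equiv> gr_mult A"
abbreviation ctr where "ctr \<equiv> gr_contr A"
abbreviation one where "one \<equiv> gr_one A"

lemma tr_car: "finite X \<Longrightarrow> finite Y \<Longrightarrow> pbij X Y f \<Longrightarrow> a \<in> car X \<Longrightarrow> tr X Y f a \<in> car Y"
  using functor_ax unfolding gr_functor_def by auto
lemma tr_id: "finite X \<Longrightarrow> a \<in> car X \<Longrightarrow> tr X X (idm X) a = a"
  using functor_ax unfolding gr_functor_def by auto
lemma tr_comp: "finite X \<Longrightarrow> finite Y \<Longrightarrow> finite Z \<Longrightarrow> pbij X Y f \<Longrightarrow> pbij Y Z g \<Longrightarrow> a \<in> car X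
   \<Longrightarrow> tr X Z (g \<circ>\<^sub>m f) a = tr Y Z g (tr X Y f a)"
  using functor_ax unfolding gr_functor_def by auto
lemma one_car: "one \<in> car {1}"
  using ops_ax unfolding gr_ops_def by auto
lemma mlt_car: "finite X \<Longrightarrow> finite Y \<Longrightarrow> pmap X Y f \<Longrightarrow> a \<in> car Y \<Longrightarrow> b \<in> Af A Y f \<Longrightarrow> mlt X Y f a b \<in> car X"
  using ops_ax unfolding gr_ops_def by auto
lemma ctr_car: "finite X \<Longrightarrow> finite Y \<Longrightarrow> pmap X Y f \<Longrightarrow> c \<in> car X \<Longrightarrow> b \<in> Af A Y f \<Longrightarrow> ctr X Y f c b \<in> car Y"
  using ops_ax unfolding gr_ops_def by auto

lemma ext_mult_assoc: "finite X \<Longrightarrow> finite Y \<Longrightarrow> finite Z \<Longrightarrow> finite W \<Longrightarrow>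
        pmap X Y f \<Longrightarrow> pmap Y Z g \<Longrightarrow> pmap Z W h \<Longrightarrow>
      d\<in>Af A W h \<Longrightarrow> c\<in>Af A Z g \<Longrightarrow> b\<in>Af A Y f \<Longrightarrow>
         ext_mult A W h (g \<circ>\<^sub>m f) d (ext_mult A Z g f c b)
         = ext_mult A W (h \<circ>\<^sub>m g) f (ext_mult A W h g d c) b"
  using assoc_ax unfolding gr_assoc_axioms_def by auto

lemma pullback_eq: "finite X \<Longrightarrow> finite Y \<Longrightarrow> finite Z \<Longrightarrow> finite W \<Longrightarrow>
        pmap Z Y g \<Longrightarrow> pmap X Y f \<Longrightarrow> pmap Y W h \<Longrightarrow>
      d\<in>Af A W (h \<circ>\<^sub>m f) \<Longrightarrow> a\<in>Af A Y g \<Longrightarrow> c\<in>Af A Y f \<Longrightarrow>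
         ext_mult A W h g (ext_contr A W h f d c) a
         = ext_contr A W (h \<circ>\<^sub>m g) (prj1 (pb g f))
             (ext_mult A W (h \<circ>\<^sub>m f) (prj2 (pb g f)) d (atil A X g f a))
             (ctil A Z g f c)"
  using pullback_ax unfolding gr_pullback_axiom_def by auto

lemma ext_mult_one_left: "finite X \<Longrightarrow> finite Y \<Longrightarrow> pmap X Y f \<Longrightarrow> a\<in>Af A Y f \<Longrightarrow>
         ext_mult A Y (idm Y) f (one_f A Y (idm Y)) a = a"
  using unit_ax unfolding gr_unit_axioms_def by auto
lemma mult_one_f_eq_tr: "finite X \<Longrightarrow> finite Y \<Longrightarrow> pbij X Y f \<Longrightarrow> a\<in>car X \<Longrightarrow>
         mlt Y X (pinv f) a (one_f A X (pinv f)) = tr X Y f a"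
  using unit_ax unfolding gr_unit_axioms_def by auto
lemma contr_one_f_eq_tr: "finite X \<Longrightarrow> finite Y \<Longrightarrow> pbij X Y f \<Longrightarrow> a\<in>car X \<Longrightarrow>
         ctr X Y f a (one_f A Y f) = tr X Y f a"
  using unit_ax unfolding gr_unit_axioms_def by auto

lemma mult1_assoc: "a\<in>car {1} \<Longrightarrow> b\<in>car {1} \<Longrightarrow> c\<in>car {1} \<Longrightarrow> mult1 A (mult1 A a b) c = mult1 A a (mult1 A b c)"
  using comm_monoid_ax unfolding gr_comm_monoid_def by auto
lemma mult1_comm: "a\<in>car {1} \<Longrightarrow> b\<in>car {1} \<Longrightarrow> mult1 A a b = mult1 A b a"
  using comm_monoid_ax unfolding gr_comm_monoid_def by auto
lemma mult1_one_left: "a\<in>car {1} \<Longrightarrow> mult1 A one a = a"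
  using comm_monoid_ax unfolding gr_comm_monoid_def by auto

lemma ext_mult_at: "z \<in> Z \<Longrightarrow> ext_mult A Z g f a b z =
   mlt (fib (g \<circ>\<^sub>m f) z) (fib g z) (f |` fib (g \<circ>\<^sub>m f) z) (a z) (restr b (fib g z))"
  by (simp add: ext_mult_def)
lemma ext_contr_at: "z \<in> Z \<Longrightarrow> ext_contr A Z g f a b z =
   ctr (fib (g \<circ>\<^sub>m f) z) (fib g z) (f |` fib (g \<circ>\<^sub>m f) z) (a z) (restr b (fib g z))"
  by (simp add: ext_contr_def)


lemma one_at_1[simp]: "one_at A 1 = one"
  using tr_id[of "{1}" one] one_car by (simp add: one_at_def idm_singleton)
lemma one_at_car: "one_at A x \<in> car {x}"
  using tr_car[of "{1}" "{x}" "[1\<mapsto>x]" one] one_car by (simp add: one_at_def)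
lemma one_f_idm: "y \<in> Y \<Longrightarrow> one_f A Y (idm Y) y = one_at A y"
  by (simp add: one_f_def)
lemma one_f_single: "one_f A {b} [a\<mapsto>b] = vec_at b (one_at A a)"
  by (auto simp: one_f_def pinv_def ran_def vec_at_def fun_eq_iff)
lemma vec_at_Af: "v \<in> car (fib f x) \<Longrightarrow> vec_at x v \<in> Af A {x} f"
  by (auto simp: Af_def vec_at_def)

lemma mult_one_at_single: "v \<in> car {1} \<Longrightarrow> mlt {1} {x} [1\<mapsto>x] (one_at A x) (vec_at x v) = v"
proof -
  assume v: "v \<in> car {1}"
  have "ext_mult A {x} (idm {x}) [1\<mapsto>x] (one_f A {x} (idm {x})) (vec_at x v) x = vec_at x v x"
    using ext_mult_one_left[of "{1}" "{x}" "[1\<mapsto>x]" "vec_at x v"] v by (simp add: vec_at_Af)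
  thus ?thesis by (simp add: ext_mult_at idm_comp one_f_idm)
qed

lemma tr_single_eq_mult: "a \<in> car {p} \<Longrightarrow> tr {p} {q} [p\<mapsto>q] a = mlt {q} {p} [q\<mapsto>p] a (vec_at p (one_at A q))"
  using mult_one_f_eq_tr[of "{p}" "{q}" "[p\<mapsto>q]" a] by (simp add: one_f_single)

lemma tr_mult_single_commute: assumes al: "\<alpha> \<in> car {x}" and be: "\<beta> \<in> car {p}"
  shows "tr {p} {1} [p\<mapsto>1] (mlt {p} {x} [p\<mapsto>x] \<alpha> (vec_at x \<beta>))
       = mlt {1} {x} [1\<mapsto>x] \<alpha> (vec_at x (tr {p} {1} [p\<mapsto>1] \<beta>))"
proof -
  have ab: "mlt {p} {x} [p\<mapsto>x] \<alpha> (vec_at x \<beta>) \<in> car {p}"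
    using mlt_car[of "{p}" "{x}" "[p\<mapsto>x]" \<alpha> "vec_at x \<beta>"] al be by (simp add: vec_at_Af)
  have "ext_mult A {x} (idm {x}) ([p\<mapsto>x] \<circ>\<^sub>m [1\<mapsto>p]) (vec_at x \<alpha>)
          (ext_mult A {x} [p\<mapsto>x] [1\<mapsto>p] (vec_at x \<beta>) (vec_at p one))
      = ext_mult A {x} (idm {x} \<circ>\<^sub>m [p\<mapsto>x]) [1\<mapsto>p]
          (ext_mult A {x} (idm {x}) [p\<mapsto>x] (vec_at x \<alpha>) (vec_at x \<beta>)) (vec_at p one)"
    by (rule ext_mult_assoc[where X="{1}" and Y="{p}" and Z="{x}"])
      (auto intro!: vec_at_Af simp: al be one_car)
  from fun_cong[OF this, of x]
  have "mlt {1} {x} [1\<mapsto>x] \<alpha> (vec_at x (mlt {1} {p} [1\<mapsto>p] \<beta> (vec_at p one)))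
     = mlt {1} {p} [1\<mapsto>p] (mlt {p} {x} [p\<mapsto>x] \<alpha> (vec_at x \<beta>)) (vec_at p one)"
    by (simp add: ext_mult_at)
  thus ?thesis using tr_single_eq_mult[OF ab, of 1] tr_single_eq_mult[OF be, of 1] by simp
qed

lemma mult_tr_single_eq_mult1: assumes c: "c \<in> car {1}" and v: "v \<in> car {1}"
  shows "mlt {1} {x} [1\<mapsto>x] (tr {1} {x} [1\<mapsto>x] c) (vec_at x v) = mult1 A c v"
proof -
  have "ext_mult A {1} (idm {1}) ([x\<mapsto>1] \<circ>\<^sub>m [1\<mapsto>x]) (vec_at 1 c)
          (ext_mult A {1} [x\<mapsto>1] [1\<mapsto>x] (vec_at 1 (one_at A x)) (vec_at x v))
      = ext_mult A {1} (idm {1} \<circ>\<^sub>m [x\<mapsto>1]) [1\<mapsto>x]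
          (ext_mult A {1} (idm {1}) [x\<mapsto>1] (vec_at 1 c) (vec_at 1 (one_at A x))) (vec_at x v)"
    by (rule ext_mult_assoc[where X="{1}" and Y="{x}" and Z="{1}"])
      (auto intro!: vec_at_Af simp: c v one_at_car)
  from fun_cong[OF this, of 1]
  have "mlt {1} {1} [1\<mapsto>1] c (vec_at 1 (mlt {1} {x} [1\<mapsto>x] (one_at A x) (vec_at x v)))
     = mlt {1} {x} [1\<mapsto>x] (mlt {x} {1} [x\<mapsto>1] c (vec_at 1 (one_at A x))) (vec_at x v)"
    by (simp add: ext_mult_at)
  thus ?thesis using tr_single_eq_mult[OF c, of x] mult_one_at_single[OF v, of x]
    by (simp add: mult1_def vec1_eq_vec_at idm_singleton)
qed

section \<open>Colon ideals\<close>

text \<open>\<open>h_comb X b c d\<close> is the element \<open>(b \<circ> c, d)\<close> that an h-ideal containing all \<open>c x\<close> must contain.\<close>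
definition h_comb where "h_comb X b c d = ctr X {1} (cmap X) (mlt X X (idm X) b (cvec A X c)) (vec1 d)"

lemma atil_val: "x \<in> X \<Longrightarrow> atil A X (idm {1}) (cmap X) (vec_at 1 v) x = tr {1} {tag x} [1\<mapsto>tag x] v"
proof -
  assume x: "x \<in> X"
  have "(\<lambda>z. if z \<in> {1} then Some (prod_encode (z, x)) else None) = [1\<mapsto>tag x]"
    by (auto simp: tag_def fun_eq_iff)
  thus ?thesis using x by (simp add: atil_def)
qed
lemma atil_out: "x \<notin> X \<Longrightarrow> atil A X g f a x = undefined" by (simp add: atil_def)

lemma ctil_val: "ctil A {1} (idm {1}) (cmap X) (vec_at 1 d) 1 = tr X (tag ` X) (tag_map X) d"
proof -
  have "(\<lambda>x. if x \<in> X then Some (prod_encode (1, x)) else None) = tag_map X"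
    by (auto simp: tag_def tag_map_def fun_eq_iff)
  thus ?thesis by (simp add: ctil_def)
qed

lemma cvec_Af: "finite X \<Longrightarrow> (\<forall>x\<in>X. c x \<in> car {1}) \<Longrightarrow> cvec A X c \<in> Af A X (idm X)"
  by (auto simp: Af_def cvec_def intro!: tr_car)
lemma mult_cvec_car: "finite X \<Longrightarrow> b \<in> car X \<Longrightarrow> (\<forall>x\<in>X. c x \<in> car {1}) \<Longrightarrow> mlt X X (idm X) b (cvec A X c) \<in> car X"
  by (intro mlt_car cvec_Af) auto
lemma vec1_Af_cmap: "d \<in> car X \<Longrightarrow> vec1 d \<in> Af A {1} (cmap X)"
  by (simp add: vec1_eq_vec_at vec_at_Af)
lemma h_comb_car: "finite X \<Longrightarrow> b \<in> car X \<Longrightarrow> d \<in> car X \<Longrightarrow> (\<forall>x\<in>X. c x \<in> car {1}) \<Longrightarrow> h_comb X b c d \<in> car {1}"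
  unfolding h_comb_def by (intro ctr_car mult_cvec_car vec1_Af_cmap) auto

lemma mult1_contr_eq_pullback: assumes fX: "finite X" and e: "e \<in> car X" and d: "d \<in> car X" and v: "v \<in> car {1}"
  shows "mult1 A (ctr X {1} (cmap X) e (vec1 d)) v =
    ctr (tag ` X) {1} (cmap (tag ` X)) (mlt (tag ` X) X (prj2 (tag ` X)) e (atil A X (idm {1}) (cmap X) (vec_at 1 v)))
        (vec_at 1 (tr X (tag ` X) (tag_map X) d))"
proof -
  have "ext_mult A {1} (idm {1}) (idm {1}) (ext_contr A {1} (idm {1}) (cmap X) (vec1 e) (vec1 d)) (vec1 v)
         = ext_contr A {1} (idm {1} \<circ>\<^sub>m idm {1}) (prj1 (pb (idm {1}) (cmap X)))
             (ext_mult A {1} (idm {1} \<circ>\<^sub>m cmap X) (prj2 (pb (idm {1}) (cmap X))) (vec1 e) (atil A X (idm {1}) (cmap X) (vec1 v)))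
             (ctil A {1} (idm {1}) (cmap X) (vec1 d))"
    by (rule pullback_eq[where X=X and Y="{1}" and Z="{1}"]) (auto simp: fX e d v vec1_eq_vec_at intro!: vec_at_Af)
  from fun_cong[OF this, of 1] show ?thesis
    by (simp add: ext_mult_at ext_contr_at mult1_def vec1_eq_vec_at ctil_val)
qed

lemma one_f_prj2: "x \<in> X \<Longrightarrow> one_f A X (prj2 (tag ` X)) x = one_at A (tag x)"
  by (simp add: one_f_def)

lemma atil_Af: "finite X \<Longrightarrow> v \<in> car {1} \<Longrightarrow> atil A X (idm {1}) (cmap X) (vec_at 1 v) \<in> Af A X (prj2 (tag ` X))"
  by (auto simp: Af_def atil_val atil_out intro!: tr_car)

lemma mult_cvec_assoc:
  assumes fX: "finite X" and b: "b \<in> car X" and c: "\<forall>x\<in>X. c x \<in> car {1}" and v: "v \<in> car {1}"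
  shows "mlt (tag ` X) X (prj2 (tag ` X)) (mlt X X (idm X) b (cvec A X c))
           (atil A X (idm {1}) (cmap X) (vec_at 1 v))
       = mlt (tag ` X) X (prj2 (tag ` X)) b
           (ext_mult A X (idm X) (prj2 (tag ` X)) (cvec A X c) (atil A X (idm {1}) (cmap X) (vec_at 1 v)))"
proof -
  let ?w = "atil A X (idm {1}) (cmap X) (vec_at 1 v)"
  have "ext_mult A {1} (cmap X) (idm X \<circ>\<^sub>m prj2 (tag ` X)) (vec_at 1 b)
          (ext_mult A X (idm X) (prj2 (tag ` X)) (cvec A X c) ?w)
      = ext_mult A {1} (cmap X \<circ>\<^sub>m idm X) (prj2 (tag ` X))
          (ext_mult A {1} (cmap X) (idm X) (vec_at 1 b) (cvec A X c)) ?w"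
    by (rule ext_mult_assoc[where X="tag ` X" and Y=X and Z=X])
      (auto simp: fX b c v atil_Af cvec_Af intro!: vec_at_Af)
  from fun_cong[OF this, of 1] show ?thesis by (simp add: ext_mult_at)
qed

lemma mult_prj2_eq_mult_idm:
  assumes fX: "finite X" and b: "b \<in> car X" and u: "u \<in> Af A X (prj2 (tag ` X))"
  shows "mlt (tag ` X) X (prj2 (tag ` X)) b u
       = mlt (tag ` X) (tag ` X) (idm (tag ` X)) (tr X (tag ` X) (tag_map X) b)
           (\<lambda>p. if p \<in> tag ` X then u (snd (prod_decode p)) else undefined)"
proof -
  define P where "P = tag ` X"
  define u2 where "u2 = (\<lambda>p. if p \<in> tag ` X then u (snd (prod_decode p)) else undefined)"
  have fP: "finite P" using fX by (simp add: P_def)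
  have u2_tag: "x \<in> X \<Longrightarrow> u2 (tag x) = u x" for x by (simp add: u2_def)
  have ux: "x \<in> X \<Longrightarrow> u x \<in> car {tag x}" for x using u by (auto simp: Af_def)
  have uout: "x \<notin> X \<Longrightarrow> u x = undefined" for x using u by (auto simp: Af_def)
  have u2Af: "u2 \<in> Af A P (idm P)"
    by (auto simp: Af_def P_def u2_def ux)
  have oneAf: "one_f A X (prj2 P) \<in> Af A X (prj2 P)"
    by (auto simp: Af_def P_def one_f_prj2 one_at_car) (auto simp: one_f_def)
  have u2_unit: "ext_mult A P (idm P) (idm P) (one_f A P (idm P)) u2 = u2"
    by (rule ext_mult_one_left[OF fP fP]) (auto simp: u2Af)
  have u_eq: "ext_mult A X (prj2 P) (idm P) (one_f A X (prj2 P)) u2 = u"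
  proof (rule ext)
    fix x show "ext_mult A X (prj2 P) (idm P) (one_f A X (prj2 P)) u2 x = u x"
    proof (cases "x \<in> X")
      case True
      have "ext_mult A P (idm P) (idm P) (one_f A P (idm P)) u2 (tag x) = u2 (tag x)" using u2_unit by simp
      thus ?thesis using True by (simp add: ext_mult_at P_def one_f_prj2 one_f_idm u2_tag)
    qed (simp add: ext_mult_def uout)
  qed
  have "ext_mult A {1} (cmap X) (prj2 P \<circ>\<^sub>m idm P) (vec_at 1 b)
          (ext_mult A X (prj2 P) (idm P) (one_f A X (prj2 P)) u2)
      = ext_mult A {1} (cmap X \<circ>\<^sub>m prj2 P) (idm P)
          (ext_mult A {1} (cmap X) (prj2 P) (vec_at 1 b) (one_f A X (prj2 P))) u2"
    by (rule ext_mult_assoc[where X=P and Y=P and Z=X])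
      (auto simp: fX fP b u2Af oneAf intro!: vec_at_Af, auto simp: P_def)
  from fun_cong[OF this, of 1]
  have "mlt P X (prj2 P) b u = mlt P P (idm P) (mlt P X (prj2 P) b (one_f A X (prj2 P))) u2"
    unfolding u_eq using restr_ext[of X u, OF uout] by (simp add: ext_mult_at P_def restr_ext u2_def)
  moreover have "mlt P X (prj2 P) b (one_f A X (prj2 P)) = tr X P (tag_map X) b"
    using mult_one_f_eq_tr[OF fX fP _ b, of "tag_map X"] by (simp add: P_def)
  ultimately show ?thesis by (simp add: P_def u2_def)
qed

lemma tr_single_inverse: "a \<in> car {1} \<Longrightarrow> tr {p} {1} [p\<mapsto>1] (tr {1} {p} [1\<mapsto>p] a) = a"
  using tr_comp[of "{1}" "{p}" "{1}" "[1\<mapsto>p]" "[p\<mapsto>1]" a] tr_id[of "{1}" a] by (simp add: idm_singleton)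
lemma tr_single_inverse': "a \<in> car {p} \<Longrightarrow> tr {1} {p} [1\<mapsto>p] (tr {p} {1} [p\<mapsto>1] a) = a"
  using tr_comp[of "{p}" "{1}" "{p}" "[p\<mapsto>1]" "[1\<mapsto>p]" a] tr_id[of "{p}" a] by (simp add: idm_singleton)

lemma ext_mult_cvec_atil_at: "x \<in> X \<Longrightarrow> ext_mult A X (idm X) (prj2 (tag ` X)) (cvec A X c) (atil A X (idm {1}) (cmap X) (vec_at 1 v)) x
   = mlt {tag x} {x} [tag x \<mapsto> x] (tr {1} {x} [1\<mapsto>x] (c x)) (vec_at x (tr {1} {tag x} [1\<mapsto>tag x] v))"
  by (simp add: ext_mult_at cvec_def atil_val)

lemma ext_mult_cvec_atil_Af: assumes fX: "finite X" and c: "\<forall>x\<in>X. c x \<in> car {1}" and v: "v \<in> car {1}"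
  shows "ext_mult A X (idm X) (prj2 (tag ` X)) (cvec A X c) (atil A X (idm {1}) (cmap X) (vec_at 1 v)) \<in> Af A X (prj2 (tag ` X))"
  unfolding Af_def
proof (intro CollectI conjI ballI allI impI)
  fix x assume x: "x \<in> X"
  show "ext_mult A X (idm X) (prj2 (tag ` X)) (cvec A X c) (atil A X (idm {1}) (cmap X) (vec_at 1 v)) x
          \<in> car (fib (prj2 (tag ` X)) x)"
    using x c v by (simp add: ext_mult_cvec_atil_at, intro mlt_car vec_at_Af tr_car) (auto intro!: tr_car)
qed (simp add: ext_mult_def)

lemma tr_ext_mult_cvec_atil_eq_mult1:
  assumes x: "x \<in> X" and cx: "c x \<in> car {1}" and v: "v \<in> car {1}"
  shows "tr {tag x} {1} [tag x\<mapsto>1]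
           (ext_mult A X (idm X) (prj2 (tag ` X)) (cvec A X c) (atil A X (idm {1}) (cmap X) (vec_at 1 v)) x)
         = mult1 A (c x) v"
proof -
  have "tr {tag x} {1} [tag x\<mapsto>1]
          (ext_mult A X (idm X) (prj2 (tag ` X)) (cvec A X c) (atil A X (idm {1}) (cmap X) (vec_at 1 v)) x)
      = mlt {1} {x} [1\<mapsto>x] (tr {1} {x} [1\<mapsto>x] (c x))
          (vec_at x (tr {tag x} {1} [tag x\<mapsto>1] (tr {1} {tag x} [1\<mapsto>tag x] v)))"
    unfolding ext_mult_cvec_atil_at[OF x]
    by (rule tr_mult_single_commute) (auto intro!: tr_car simp: cx v)
  also have "\<dots> = mult1 A (c x) v"
    using mult_tr_single_eq_mult1[OF cx v] by (simp add: tr_single_inverse v)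
  finally show ?thesis .
qed

text \<open>
  By the pullback axiom \<open>(b \<circ> c, d) \<circ> v = ((b \<circ> c) \<circ> v\<^sup>~, d\<^sup>~)\<close>; associativity moves \<open>v\<^sup>~\<close>
  into \<open>c\<close>, and reindexing along \<open>tag\<close> brings the result back to the shape \<open>(b' \<circ> c', d')\<close>
  with \<open>c' = c \<circ> v\<close> pointwise.
\<close>
lemma mult1_h_comb_right: assumes fX: "finite X" and b: "b \<in> car X" and d: "d \<in> car X"
  and c: "\<forall>x\<in>X. c x \<in> car {1}" and v: "v \<in> car {1}"
  shows "\<exists>P b' c' d'. finite P \<and> b' \<in> car P \<and> d' \<in> car P \<and> (\<forall>p\<in>P. \<exists>x\<in>X. c' p = mult1 A (c x) v)
     \<and> mult1 A (h_comb X b c d) v = h_comb P b' c' d'"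
proof -
  define P where "P = tag ` X"
  define w where "w = atil A X (idm {1}) (cmap X) (vec_at 1 v)"
  define u where "u = ext_mult A X (idm X) (prj2 (tag ` X)) (cvec A X c) w"
  define u2 where "u2 = (\<lambda>p. if p \<in> tag ` X then u (snd (prod_decode p)) else undefined)"
  define c' where "c' = (\<lambda>p. tr {p} {1} [p\<mapsto>1] (u2 p))"
  have fP: "finite P" using fX by (simp add: P_def)
  have uAf: "u \<in> Af A X (prj2 (tag ` X))" unfolding u_def w_def using ext_mult_cvec_atil_Af fX c v by blast
  have ux: "x \<in> X \<Longrightarrow> u x \<in> car {tag x}" for x using uAf by (auto simp: Af_def)
  have cv: "cvec A P c' = u2"
  proof (rule ext)
    fix p show "cvec A P c' p = u2 p"
      by (cases "p \<in> P") (auto simp: cvec_def c'_def u2_def P_def tr_single_inverse' ux)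
  qed
  have c'v: "c' (tag x) = mult1 A (c x) v" if x: "x \<in> X" for x
    using tr_ext_mult_cvec_atil_eq_mult1[OF x _ v] c x by (simp add: c'_def u2_def u_def w_def)
  have e: "mlt X X (idm X) b (cvec A X c) \<in> car X" using mult_cvec_car fX b c by blast
  have "mult1 A (h_comb X b c d) v
      = ctr P {1} (cmap P) (mlt P X (prj2 P) (mlt X X (idm X) b (cvec A X c)) w) (vec_at 1 (tr X P (tag_map X) d))"
    unfolding h_comb_def P_def w_def by (rule mult1_contr_eq_pullback[OF fX e d v])
  also have "\<dots> = ctr P {1} (cmap P) (mlt P X (prj2 P) b u) (vec_at 1 (tr X P (tag_map X) d))"
    unfolding P_def w_def u_def by (subst mult_cvec_assoc[OF fX b c v]) (rule refl)
  also have "\<dots> = ctr P {1} (cmap P) (mlt P P (idm P) (tr X P (tag_map X) b) u2) (vec_at 1 (tr X P (tag_map X) d))"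
    unfolding P_def u2_def by (subst mult_prj2_eq_mult_idm[OF fX b uAf]) (rule refl)
  also have "\<dots> = h_comb P (tr X P (tag_map X) b) c' (tr X P (tag_map X) d)"
    unfolding h_comb_def cv by (simp add: vec1_eq_vec_at)
  finally have eq: "mult1 A (h_comb X b c d) v = h_comb P (tr X P (tag_map X) b) c' (tr X P (tag_map X) d)" .
  show ?thesis
  proof (intro exI conjI)
    show "finite P" by (rule fP)
    show "tr X P (tag_map X) b \<in> car P" using b fX fP by (intro tr_car) (auto simp: P_def)
    show "tr X P (tag_map X) d \<in> car P" using d fX fP by (intro tr_car) (auto simp: P_def)
    show "\<forall>p\<in>P. \<exists>x\<in>X. c' p = mult1 A (c x) v" using c'v by (auto simp: P_def)
  qed (rule eq)
qed

lemma one_f_idm_1: "one_f A {1} (idm {1}) = vec_at 1 one"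
  by (auto simp: fun_eq_iff vec_at_def one_f_idm) (simp add: one_f_def)

lemma h_comb_singleton: assumes b: "b \<in> car {1}" and q: "q \<in> car {1}" shows "h_comb {1} b (\<lambda>_. q) one = mult1 A b q"
proof -
  have cv: "cvec A {1} (\<lambda>_. q) = vec_at 1 q"
    using tr_id[of "{1}" q] q by (auto simp: cvec_def vec_at_def fun_eq_iff idm_singleton)
  have m: "mlt {1} {1} (idm {1}) b (vec_at 1 q) \<in> car {1}"
    using mlt_car[of "{1}" "{1}" "idm {1}" b "vec_at 1 q"] b q by (simp add: vec_at_Af)
  show ?thesis unfolding h_comb_def cv cmap_singleton_1
    using contr_one_f_eq_tr[of "{1}" "{1}" "idm {1}", OF _ _ _ m] tr_id[OF _ m]
    by (simp add: one_f_idm_1 vec1_eq_vec_at mult1_def)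
qed

lemma h_ideal_subset: "h_ideal A I \<Longrightarrow> I \<subseteq> car {1}" by (simp add: h_ideal_def)
lemma h_ideal_h_comb: "h_ideal A I \<Longrightarrow> finite X \<Longrightarrow> b \<in> car X \<Longrightarrow> d \<in> car X \<Longrightarrow> \<forall>x\<in>X. c x \<in> I \<Longrightarrow> h_comb X b c d \<in> I"
  unfolding h_ideal_def h_comb_def by blast
lemma h_idealI: "I \<subseteq> car {1} \<Longrightarrow> (\<And>X b d c. finite X \<Longrightarrow> b \<in> car X \<Longrightarrow> d \<in> car X \<Longrightarrow> \<forall>x\<in>X. c x \<in> I \<Longrightarrow> h_comb X b c d \<in> I)
   \<Longrightarrow> h_ideal A I"
  unfolding h_ideal_def h_comb_def by blast

lemma h_ideal_mult1_closed: assumes I: "h_ideal A I" and q: "q \<in> I" and v: "v \<in> car {1}" shows "mult1 A v q \<in> I"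
proof -
  have "h_comb {1} v (\<lambda>_. q) one \<in> I" using h_ideal_h_comb[OF I, of "{1}" v one "\<lambda>_. q"] q v one_car by simp
  thus ?thesis using h_comb_singleton[OF v] h_ideal_subset[OF I] q by auto
qed

lemma h_ideal_colon: assumes Q: "h_ideal A Q" and v: "v \<in> car {1}" shows "h_ideal A {u \<in> car {1}. mult1 A u v \<in> Q}"
proof (rule h_idealI)
  fix X b d c assume fX: "finite X" and b: "b \<in> car X" and d: "d \<in> car X"
    and c: "\<forall>x\<in>X. c x \<in> {u \<in> car {1}. mult1 A u v \<in> Q}"
  have c1: "\<forall>x\<in>X. c x \<in> car {1}" using c by auto
  obtain P b' c' d' where P: "finite P" "b' \<in> car P" "d' \<in> car P" "\<forall>p\<in>P. \<exists>x\<in>X. c' p = mult1 A (c x) v"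
    and eq: "mult1 A (h_comb X b c d) v = h_comb P b' c' d'" using mult1_h_comb_right[OF fX b d c1 v] by blast
  have "\<forall>p\<in>P. c' p \<in> Q" using P(4) c by fastforce
  hence "h_comb P b' c' d' \<in> Q" using h_ideal_h_comb[OF Q P(1-3)] by blast
  thus "h_comb X b c d \<in> {u \<in> car {1}. mult1 A u v \<in> Q}" using eq h_comb_car[OF fX b d c1] by simp
qed auto

lemma h_ideal_carrier: "h_ideal A (car {1})"
  by (rule h_idealI) (auto intro: h_comb_car)

section \<open>Generated h-ideals and prime avoidance\<close>

definition hgen where "hgen S = \<Inter>{I. h_ideal A I \<and> S \<subseteq> I}"

lemma h_ideal_hgen: "S \<subseteq> car {1} \<Longrightarrow> h_ideal A (hgen S)"
proof (rule h_idealI)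
  show "S \<subseteq> car {1} \<Longrightarrow> hgen S \<subseteq> car {1}" unfolding hgen_def using h_ideal_carrier by blast
  fix X b d c assume "finite X" "b \<in> car X" "d \<in> car X" "\<forall>x\<in>X. c x \<in> hgen S"
  thus "h_comb X b c d \<in> hgen S" unfolding hgen_def using h_ideal_h_comb by blast
qed

lemma hgen_superset: "S \<subseteq> hgen S" unfolding hgen_def by blast
lemma hgen_least: "h_ideal A J \<Longrightarrow> S \<subseteq> J \<Longrightarrow> hgen S \<subseteq> J" unfolding hgen_def by blast
lemma hgen_mono: "S \<subseteq> S' \<Longrightarrow> hgen S \<subseteq> hgen S'" unfolding hgen_def by blast

lemma hgen_Union_finite:
  assumes \<S>: "\<Union>\<S> \<subseteq> car {1}" and u: "u \<in> hgen (\<Union>\<S>)"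
  shows "\<exists>\<T>\<subseteq>\<S>. finite \<T> \<and> u \<in> hgen (\<Union>\<T>)"
proof -
  define J where "J = {u. \<exists>\<T>\<subseteq>\<S>. finite \<T> \<and> u \<in> hgen (\<Union>\<T>)}"
  have sub: "\<Union>\<T> \<subseteq> car {1}" if "\<T> \<subseteq> \<S>" for \<T> using \<S> that by blast
  have "h_ideal A J"
  proof (rule h_idealI)
    show "J \<subseteq> car {1}" unfolding J_def using h_ideal_hgen[OF sub] h_ideal_subset by blast
    fix X b d c assume X: "finite X" and b: "b \<in> car X" and d: "d \<in> car X" and c: "\<forall>x\<in>X. c x \<in> J"
    then obtain F where F: "\<forall>x\<in>X. F x \<subseteq> \<S> \<and> finite (F x) \<and> c x \<in> hgen (\<Union>(F x))"
      unfolding J_def using bchoice[of X "\<lambda>x T. T \<subseteq> \<S> \<and> finite T \<and> c x \<in> hgen (\<Union>T)"] by blast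
    define \<T> where "\<T> = \<Union>(F ` X)"
    have \<T>: "\<T> \<subseteq> \<S>" "finite \<T>" using F X by (auto simp: \<T>_def)
    have "\<forall>x\<in>X. c x \<in> hgen (\<Union>\<T>)"
    proof
      fix x assume x: "x \<in> X"
      have "hgen (\<Union>(F x)) \<subseteq> hgen (\<Union>\<T>)" by (rule hgen_mono) (use x in \<open>auto simp: \<T>_def\<close>)
      thus "c x \<in> hgen (\<Union>\<T>)" using F x by blast
    qed
    hence "h_comb X b c d \<in> hgen (\<Union>\<T>)" using h_ideal_h_comb[OF h_ideal_hgen[OF sub[OF \<T>(1)]] X b d] by blast
    thus "h_comb X b c d \<in> J" unfolding J_def using \<T> by blast
  qed
  moreover have "\<Union>\<S> \<subseteq> J"
  proof
    fix s assume "s \<in> \<Union>\<S>"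
    then obtain S where "S \<in> \<S>" "s \<in> S" by blast
    thus "s \<in> J" unfolding J_def using hgen_superset[of S] by (intro CollectI exI[of _ "{S}"]) auto
  qed
  ultimately have "hgen (\<Union>\<S>) \<subseteq> J" by (rule hgen_least)
  thus ?thesis using u by (auto simp: J_def)
qed

lemma h_ideal_Union_chain:
  assumes ch: "chain\<^sub>\<subseteq> C" and ne: "C \<noteq> {}" and I: "\<forall>I\<in>C. h_ideal A I"
  shows "h_ideal A (\<Union>C)"
proof (rule h_idealI)
  show "\<Union>C \<subseteq> car {1}" using I h_ideal_subset by blast
  fix X b d c assume X: "finite X" "b \<in> car X" "d \<in> car X" and c: "\<forall>x\<in>X. c x \<in> \<Union>C"
  have "\<exists>J\<in>C. \<forall>x\<in>X. c x \<in> J"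
    using X(1) c
  proof (induction X rule: finite_induct)
    case (insert x F)
    then obtain J1 J2 where "J1 \<in> C" "\<forall>y\<in>F. c y \<in> J1" "J2 \<in> C" "c x \<in> J2" by auto
    moreover from ch this have "J1 \<subseteq> J2 \<or> J2 \<subseteq> J1" by (auto simp: chain_subset_def)
    ultimately show ?case by blast
  qed (use ne in auto)
  thus "h_comb X b c d \<in> \<Union>C" using I X h_ideal_h_comb by blast
qed

definition pow1 where "pow1 a n = ((mult1 A a) ^^ n) one"

lemma pow1_0[simp]: "pow1 a 0 = one" by (simp add: pow1_def)
lemma pow1_Suc: "pow1 a (Suc n) = mult1 A a (pow1 a n)" by (simp add: pow1_def)

lemma mult1_car: "x \<in> car {1} \<Longrightarrow> y \<in> car {1} \<Longrightarrow> mult1 A x y \<in> car {1}"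
  unfolding mult1_def using mlt_car[of "{1}" "{1}" "idm {1}" x "vec1 y"] by (simp add: vec1_eq_vec_at vec_at_Af)
lemma pow1_car: "a \<in> car {1} \<Longrightarrow> pow1 a n \<in> car {1}"
  by (induction n) (auto simp: pow1_Suc one_car mult1_car)
lemma pow1_add: "a \<in> car {1} \<Longrightarrow> mult1 A (pow1 a m) (pow1 a n) = pow1 a (m + n)"
  by (induction m) (auto simp: pow1_Suc mult1_one_left pow1_car mult1_assoc)
lemma pow1_1: "a \<in> car {1} \<Longrightarrow> pow1 a 1 = a"
  using pow1_Suc[of a 0] mult1_comm[of a one] mult1_one_left[of a] one_car by (simp add: One_nat_def)

lemma prime_pow1_mem: "is_prime A P \<Longrightarrow> a \<in> car {1} \<Longrightarrow> pow1 a n \<in> P \<Longrightarrow> a \<in> P"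
proof (induction n)
  case (Suc n) thus ?case using pow1_car[OF Suc.prems(2), of n] unfolding is_prime_def pow1_Suc by blast
qed (simp add: is_prime_def)

lemma prime_if_maximal_avoiding_powers:
  assumes a: "a \<in> car {1}" and M: "h_ideal A M" and avoid: "\<forall>n. pow1 a n \<notin> M"
    and maximal: "\<And>J. h_ideal A J \<Longrightarrow> M \<subseteq> J \<Longrightarrow> \<forall>n. pow1 a n \<notin> J \<Longrightarrow> J = M"
  shows "is_prime A M"
proof -
  have M1: "M \<subseteq> car {1}" using h_ideal_subset[OF M] .
  have power_in_extension: "\<exists>n. pow1 a n \<in> hgen (M \<union> {x})" if x: "x \<in> car {1}" "x \<notin> M" for x
  proof (rule ccontr)
    assume "\<not> ?thesis"
    hence "hgen (M \<union> {x}) = M" using maximal h_ideal_hgen[of "M \<union> {x}"] hgen_superset[of "M \<union> {x}"] M1 x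
      by blast
    thus False using hgen_superset[of "M \<union> {x}"] x by blast
  qed
  have extension_in_colon: "hgen (M \<union> {x}) \<subseteq> {u \<in> car {1}. mult1 A u y \<in> M}"
    if x: "x \<in> car {1}" and y: "y \<in> car {1}" and xy: "mult1 A x y \<in> M" for x y
  proof (rule hgen_least[OF h_ideal_colon[OF M y]])
    have "mult1 A u y \<in> M" if "u \<in> M" for u
      using h_ideal_mult1_closed[OF M that y] that M1 mult1_comm[of u y] y by auto
    thus "M \<union> {x} \<subseteq> {u \<in> car {1}. mult1 A u y \<in> M}" using M1 x xy by auto
  qed
  show ?thesis unfolding is_prime_def
  proof (intro conjI ballI impI)
    show "h_ideal A M" by (rule M)
    show "one \<notin> M" using avoid pow1_0 by metis
    fix x y assume x: "x \<in> car {1}" and y: "y \<in> car {1}" and xy: "mult1 A x y \<in> M"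
    show "x \<in> M \<or> y \<in> M"
    proof (rule ccontr)
      assume "\<not> (x \<in> M \<or> y \<in> M)"
      then obtain n m where n: "pow1 a n \<in> hgen (M \<union> {x})" and m: "pow1 a m \<in> hgen (M \<union> {y})"
        using power_in_extension x y by blast
      have "mult1 A (pow1 a n) y \<in> M" using extension_in_colon[OF x y xy] n by blast
      hence "mult1 A y (pow1 a n) \<in> M" using mult1_comm[OF y pow1_car[OF a]] by simp
      hence "mult1 A (pow1 a m) (pow1 a n) \<in> M" using extension_in_colon[OF y pow1_car[OF a]] m by blast
      thus False using pow1_add[OF a] avoid by simp
    qed
  qed
qed

lemma exists_prime_avoiding_powers:
  assumes a: "a \<in> car {1}" and I: "h_ideal A I" and avoid: "\<forall>n. pow1 a n \<notin> I"
  shows "\<exists>P. is_prime A P \<and> I \<subseteq> P \<and> a \<notin> P"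
proof -
  define \<A> where "\<A> = {J. h_ideal A J \<and> I \<subseteq> J \<and> (\<forall>n. pow1 a n \<notin> J)}"
  have "\<forall>C\<in>chains \<A>. \<exists>U\<in>\<A>. \<forall>J\<in>C. J \<subseteq> U"
  proof
    fix C assume C: "C \<in> chains \<A>"
    show "\<exists>U\<in>\<A>. \<forall>J\<in>C. J \<subseteq> U"
    proof (cases "C = {}")
      case True
      have "I \<in> \<A>" using I avoid by (simp add: \<A>_def)
      thus ?thesis using True by blast
    next
      case False
      have "chain\<^sub>\<subseteq> C" "C \<subseteq> \<A>" using C by (auto simp: chains_def)
      moreover have "I \<subseteq> \<Union>C" "\<forall>n. pow1 a n \<notin> \<Union>C"
        using \<open>C \<subseteq> \<A>\<close> False by (auto simp: \<A>_def)
      ultimately have "\<Union>C \<in> \<A>" using h_ideal_Union_chain[OF _ False] by (auto simp: \<A>_def)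
      thus ?thesis by blast
    qed
  qed
  then obtain M where M: "M \<in> \<A>" and maximal: "\<forall>J\<in>\<A>. M \<subseteq> J \<longrightarrow> J = M"
    using Zorn_Lemma2 by blast
  have M_ideal: "h_ideal A M" and IM: "I \<subseteq> M" and M_avoid: "\<forall>n. pow1 a n \<notin> M"
    using M by (auto simp: \<A>_def)
  have "is_prime A M"
  proof (rule prime_if_maximal_avoiding_powers[OF a M_ideal M_avoid])
    fix J assume "h_ideal A J" "M \<subseteq> J" "\<forall>n. pow1 a n \<notin> J"
    thus "J = M" using maximal IM by (auto simp: \<A>_def)
  qed
  moreover have "a \<notin> M" using M_avoid pow1_1[OF a] by metis
  ultimately show ?thesis using IM by blast
qed

lemma basicD_subset_iff_pow1_in_hgen:
  assumes a: "a \<in> car {1}" and J: "J \<subseteq> car {1}"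
  shows "basicD A a \<subseteq> spec A - zarV A J \<longleftrightarrow> (\<exists>n. pow1 a n \<in> hgen J)"
proof
  assume "\<exists>n. pow1 a n \<in> hgen J"
  then obtain n where n: "pow1 a n \<in> hgen J" ..
  show "basicD A a \<subseteq> spec A - zarV A J"
  proof
    fix P assume P: "P \<in> basicD A a"
    hence prime: "is_prime A P" and "a \<notin> P" by (auto simp: basicD_def spec_def)
    moreover have "J \<subseteq> P \<Longrightarrow> pow1 a n \<in> P"
      using n hgen_least prime by (auto simp: is_prime_def)
    ultimately show "P \<in> spec A - zarV A J" using prime_pow1_mem[OF prime a] P
      by (auto simp: zarV_def basicD_def)
  qed
next
  assume sub: "basicD A a \<subseteq> spec A - zarV A J"
  show "\<exists>n. pow1 a n \<in> hgen J"
  proof (rule ccontr)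
    assume "\<not> ?thesis"
    then obtain P where "is_prime A P" "hgen J \<subseteq> P" "a \<notin> P"
      using exists_prime_avoiding_powers[OF a h_ideal_hgen[OF J]] by blast
    thus False using sub hgen_superset[of J] by (auto simp: basicD_def spec_def zarV_def)
  qed
qed

section \<open>Compactness\<close>

lemma basicD_compact:
  assumes a: "a \<in> car {1}"
  shows "zar_compact A (basicD A a)"
  unfolding zar_compact_def
proof (intro allI impI, elim conjE)
  fix \<U> assume "\<forall>U\<in>\<U>. zar_open A U" and cover: "basicD A a \<subseteq> \<Union>\<U>"
  then obtain I where I: "\<forall>U\<in>\<U>. I U \<subseteq> car {1} \<and> U = spec A - zarV A (I U)"
    unfolding zar_open_def by metis
  have Union_eq: "spec A - zarV A (\<Union>(I ` \<V>)) = \<Union>\<V>" if "\<V> \<subseteq> \<U>" for \<V>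
  proof -
    have "spec A - zarV A (\<Union>(I ` \<V>)) = (\<Union>U\<in>\<V>. spec A - zarV A (I U))"
      by (auto simp: zarV_def)
    also have "\<dots> = \<Union>\<V>" using I that by (simp cong: SUP_cong_simp) blast
    finally show ?thesis .
  qed
  have sub: "\<Union>(I ` \<U>) \<subseteq> car {1}" using I by blast
  obtain n where "pow1 a n \<in> hgen (\<Union>(I ` \<U>))"
    using basicD_subset_iff_pow1_in_hgen[OF a sub] Union_eq cover by auto
  then obtain \<T> where "\<T> \<subseteq> I ` \<U>" "finite \<T>" "pow1 a n \<in> hgen (\<Union>\<T>)"
    using hgen_Union_finite[OF sub] by blast
  then obtain \<V> where \<V>: "\<V> \<subseteq> \<U>" "finite \<V>" and n: "pow1 a n \<in> hgen (\<Union>(I ` \<V>))"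
    by (metis finite_subset_image)
  have "basicD A a \<subseteq> \<Union>\<V>"
    using basicD_subset_iff_pow1_in_hgen[OF a, of "\<Union>(I ` \<V>)"] Union_eq[OF \<V>(1)] sub \<V>(1) n by blast
  thus "\<exists>\<V>\<subseteq>\<U>. finite \<V> \<and> basicD A a \<subseteq> \<Union>\<V>" using \<V> by blast
qed

end

lemma spec_eq_basicD_one: "spec A = basicD A (gr_one A)"
  by (auto simp: spec_def basicD_def is_prime_def)

theorem proposition4p3p9:
  fixes A :: "'e gring" and a :: 'e
  assumes "generalized_ring A" and "a \<in> gr_car A {1}"
  shows "zar_compact A (basicD A a) \<and> spec A = basicD A (gr_one A) \<and> zar_compact A (spec A)"
proof -
  interpret gen_ring A by (rule gen_ring.intro) (rule assms(1))
  show ?thesis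
    using basicD_compact[OF assms(2)] basicD_compact[OF one_car] spec_eq_basicD_one[of A] by simp
qed

end
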